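(* Let $H$ be a complex Hilbert space, $\varphi,\psi:[0,1]\to\mathbb{R}$ continuous, and $A\in\mathbb{B}(H)$. Then: (1) if $\varphi\ne-\psi$ (i.e. $\varphi+\psi$ is not identically zero), then $\displaystyle\|\operatorname{Re}A\|\le\Big(\int_0^1|\varphi(t)+\psi(t)|\,dt\Big)^{-1}\int_0^1\omega_t(\varphi,\psi;A)\,dt$; (2) if $\varphi\ne\psi$, then $\displaystyle\|\operatorname{Im}A\|\le\Big(\int_0^1|\varphi(t)-\psi(t)|\,dt\Big)^{-1}\int_0^1\omega_t(\varphi,\psi;A)\,dt$; (3) if $|\varphi|\ne|\psi|$, then $\displaystyle\|A\|\le\Big[\Big(\int_0^1|\varphi(t)+\psi(t)|\,dt\Big)^{-1}+\Big(\int_0^1|\varphi(t)-\psi(t)|\,dt\Big)^{-1}\Big]\int_0^1\omega_t(\varphi,\psi;A)\,dt$.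
   Context: $\operatorname{Re}A=(A+A^* )/2$, $\operatorname{Im}A=(A-A^* )/(2i)$. $S_1(H)$ is the unit sphere of $H$ and $\omega_t(\varphi,\psi;A)=\sup_{x\in S_1(H)}|\langle(\varphi(t)A+\psi(t)A^* )x,x\rangle|$ for $t\in[0,1]$. *)

theory Defs
  imports "HOL-Analysis.Analysis"
begin

class complex_inner = real_normed_vector +
  fixes scaleC :: "complex \<Rightarrow> 'a \<Rightarrow> 'a"
    and cinner :: "'a \<Rightarrow> 'a \<Rightarrow> complex"
  assumes scaleC_add_right: "scaleC a (x + y) = scaleC a x + scaleC a y"
    and scaleC_add_left: "scaleC (a + b) x = scaleC a x + scaleC b x"
    and scaleC_scaleC: "scaleC a (scaleC b x) = scaleC (a * b) x"
    and scaleC_one: "scaleC 1 x = x"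
    and scaleR_scaleC: "scaleR r x = scaleC (complex_of_real r) x"
    and cinner_add_left: "cinner (x + y) z = cinner x z + cinner y z"
    and cinner_scaleC_left: "cinner (scaleC a x) y = a * cinner x y"
    and cinner_conj: "cinner y x = cnj (cinner x y)"
    and norm_cinner: "norm x = sqrt (Re (cinner x x))"

class complex_hilbert = complex_inner + complete_space

definition bounded_op :: "('a::complex_inner \<Rightarrow> 'a) \<Rightarrow> bool" where
  "bounded_op A \<longleftrightarrow> bounded_linear A \<and> (\<forall>c x. A (scaleC c x) = scaleC c (A x))"

definition is_adjoint :: "('a::complex_inner \<Rightarrow> 'a) \<Rightarrow> ('a \<Rightarrow> 'a) \<Rightarrow> bool" where
  "is_adjoint A B \<longleftrightarrow> (\<forall>x y. cinner (A x) y = cinner x (B y))"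

definition ReOp :: "('a::complex_inner \<Rightarrow> 'a) \<Rightarrow> ('a \<Rightarrow> 'a) \<Rightarrow> 'a \<Rightarrow> 'a" where
  "ReOp A B = (\<lambda>x. scaleC (1/2) (A x + B x))"

definition ImOp :: "('a::complex_inner \<Rightarrow> 'a) \<Rightarrow> ('a \<Rightarrow> 'a) \<Rightarrow> 'a \<Rightarrow> 'a" where
  "ImOp A B = (\<lambda>x. scaleC (1 / (2 * \<i>)) (A x - B x))"

text \<open>The value 0 is inserted so that the supremum over the empty sphere (H = {0}) is 0;
for nontrivial H this does not change the supremum (all values are nonnegative).\<close>
definition omega :: "(real \<Rightarrow> real) \<Rightarrow> (real \<Rightarrow> real) \<Rightarrow> ('a::complex_inner \<Rightarrow> 'a) \<Rightarrow> ('a \<Rightarrow> 'a) \<Rightarrow> real \<Rightarrow> real" where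
  "omega \<phi> \<psi> A B t =
     Sup (insert 0 ((\<lambda>x. cmod (cinner (scaleC (complex_of_real (\<phi> t)) (A x)
                                     + scaleC (complex_of_real (\<psi> t)) (B x)) x)) ` {x. norm x = 1}))"

end

theory Submission
  imports Defs
begin

(* For a unit vector x, with a = <Ax, x>, one has
     <(phi(t) A + psi(t) A^* )x, x> = (phi(t) + psi(t)) Re a + i (phi(t) - psi(t)) Im a,
   so |phi(t) + psi(t)| |<(Re A)x, x>| <= omega_t and |phi(t) - psi(t)| |<(Im A)x, x>| <= omega_t.
   Integrating over [0,1] bounds the numerical radii of the self-adjoint operators Re A and Im A,
   and for self-adjoint operators the norm is at most the numerical radius (polarization and the
   parallelogram law). Part (3) follows from A = Re A + i Im A. The integrals make sense because
   omega_t is a Lipschitz function of the pair (phi(t), psi(t)), hence continuous in t. *)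

section \<open>Complex inner product spaces\<close>

lemma cinner_add_right: "cinner x (y + z) = cinner x y + cinner x z"
  using cinner_conj[of x "y + z"] cinner_conj[of x y] cinner_conj[of x z]
  by (simp add: cinner_add_left)

lemma cinner_scaleC_right: "cinner x (scaleC a y) = cnj a * cinner x y"
  using cinner_conj[of x "scaleC a y"] cinner_conj[of x y] by (simp add: cinner_scaleC_left)

lemma cinner_scaleR_left: "cinner (scaleR r x) y = complex_of_real r * cinner x y"
  by (simp add: scaleR_scaleC cinner_scaleC_left)

lemma cinner_scaleR_right: "cinner x (scaleR r y) = complex_of_real r * cinner x y"
  by (simp add: scaleR_scaleC cinner_scaleC_right)

lemma cinner_minus_left: "cinner (- x) y = - cinner x y"
  using cinner_scaleR_left[of "-1" x y] by simp

lemma cinner_minus_right: "cinner x (- y) = - cinner x y"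
  using cinner_scaleR_right[of x "-1" y] by simp

lemma cinner_diff_left: "cinner (x - y) z = cinner x z - cinner y z"
  using cinner_add_left[of x "- y" z] by (simp add: cinner_minus_left)

lemma cinner_diff_right: "cinner x (y - z) = cinner x y - cinner x z"
  using cinner_add_right[of x y "- z"] by (simp add: cinner_minus_right)

lemma cinner_zero_left: "cinner 0 y = 0"
  using cinner_scaleR_left[of 0 0 y] by simp

lemma scaleC_diff_right: "scaleC c (x - y) = scaleC c x - scaleC c y"
  by (metis scaleC_add_right diff_add_cancel eq_diff_eq)

lemma cinner_self_eq_norm_sq: "cinner x x = complex_of_real ((norm x)\<^sup>2)"
proof -
  have "Im (cinner x x) = 0"
    using arg_cong[OF cinner_conj[of x x], of Im] by simp
  moreover have "Re (cinner x x) \<ge> 0"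
    using norm_cinner[of x] norm_ge_zero[of x] by (cases "Re (cinner x x) \<ge> 0") auto
  ultimately show ?thesis
    by (simp add: norm_cinner complex_eq_iff)
qed

lemma norm_sq_eq_Re_cinner: "(norm x)\<^sup>2 = Re (cinner x x)"
  by (simp add: cinner_self_eq_norm_sq)

lemma Re_cinner_commute: "Re (cinner y x) = Re (cinner x y)"
  using cinner_conj[of y x] by simp

lemma cinner_eqI: "(\<And>z. cinner z u = cinner z v) \<Longrightarrow> u = v"
  using cinner_self_eq_norm_sq[of "u - v"] by (simp add: cinner_diff_right)

lemma norm_sq_add: "(norm (x + y))\<^sup>2 = (norm x)\<^sup>2 + (norm y)\<^sup>2 + 2 * Re (cinner x y)"
  using Re_cinner_commute[of y x]
  by (simp add: norm_sq_eq_Re_cinner cinner_add_left cinner_add_right)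

lemma norm_sq_diff: "(norm (x - y))\<^sup>2 = (norm x)\<^sup>2 + (norm y)\<^sup>2 - 2 * Re (cinner x y)"
  using Re_cinner_commute[of y x]
  by (simp add: norm_sq_eq_Re_cinner cinner_diff_left cinner_diff_right)

lemma norm_scaleC: "norm (scaleC c x) = cmod c * norm x"
proof -
  have "cinner (scaleC c x) (scaleC c x) = (c * cnj c) * cinner x x"
    by (simp add: cinner_scaleC_left cinner_scaleC_right)
  also have "\<dots> = complex_of_real ((cmod c * norm x)\<^sup>2)"
    by (simp add: cinner_self_eq_norm_sq complex_norm_square[symmetric] power_mult_distrib)
  finally show ?thesis
    using norm_cinner[of "scaleC c x"] by simp
qed

lemma cnj_sgn_mult_self: "cnj (sgn c) * c = complex_of_real (cmod c)"
proof (cases "c = 0")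
  case False
  have "cnj c * c = complex_of_real (cmod c) * complex_of_real (cmod c)"
    by (metis complex_norm_square mult.commute of_real_mult power2_eq_square)
  then show ?thesis
    using False by (simp add: sgn_eq)
qed simp

lemma cmod_cinner_le: "cmod (cinner x y) \<le> ((norm x)\<^sup>2 + (norm y)\<^sup>2) / 2"
proof -
  define \<alpha> where "\<alpha> = sgn (cinner x y)"
  have Re_eq: "Re (cinner x (scaleC \<alpha> y)) = cmod (cinner x y)"
    by (simp add: \<alpha>_def cinner_scaleC_right cnj_sgn_mult_self)
  have "norm (scaleC \<alpha> y) \<le> norm y"
    by (simp add: \<alpha>_def norm_scaleC norm_sgn mult_left_le_one_le)
  then have "(norm (scaleC \<alpha> y))\<^sup>2 \<le> (norm y)\<^sup>2"
    by (simp add: power_mono)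
  then have "2 * cmod (cinner x y) \<le> (norm x)\<^sup>2 + (norm y)\<^sup>2"
    using norm_sq_diff[of x "scaleC \<alpha> y"] zero_le_power2[of "norm (x - scaleC \<alpha> y)"] Re_eq
    by linarith
  then show ?thesis
    by simp
qed

section \<open>Adjoints and self-adjoint operators\<close>

lemma is_adjoint_sym: "is_adjoint A B \<Longrightarrow> is_adjoint B A"
  unfolding is_adjoint_def by (metis cinner_conj)

lemma is_adjoint_cinner_self: "is_adjoint A B \<Longrightarrow> cinner (B x) x = cnj (cinner (A x) x)"
  unfolding is_adjoint_def by (metis cinner_conj)

lemma is_adjoint_add: "is_adjoint A B \<Longrightarrow> B (x + y) = B x + B y"
  unfolding is_adjoint_def by (rule cinner_eqI) (metis cinner_add_right)

lemma is_adjoint_scaleC: "is_adjoint A B \<Longrightarrow> B (scaleC c x) = scaleC c (B x)"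
  unfolding is_adjoint_def by (rule cinner_eqI) (metis cinner_scaleC_right)

lemma is_adjoint_scaleR: "is_adjoint A B \<Longrightarrow> B (scaleR r x) = scaleR r (B x)"
  by (simp add: scaleR_scaleC is_adjoint_scaleC)

lemma is_adjoint_diff: "is_adjoint A B \<Longrightarrow> B (x - y) = B x - B y"
  using is_adjoint_add[of A B x "- y"] is_adjoint_scaleR[of A B "-1" y] by simp

lemma parallelogram_law:
  fixes x y :: "'a::complex_inner"
  shows "(norm (x + y))\<^sup>2 + (norm (x - y))\<^sup>2 = 2 * (norm x)\<^sup>2 + 2 * (norm y)\<^sup>2"
  by (simp add: norm_sq_add norm_sq_diff)

lemma self_adjoint_polarization:
  assumes "is_adjoint T T"
  shows "4 * Re (cinner (T x) y) = Re (cinner (T (x + y)) (x + y)) - Re (cinner (T (x - y)) (x - y))"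
proof -
  have "Re (cinner (T y) x) = Re (cinner (T x) y)"
    using assms Re_cinner_commute[of y "T x"] unfolding is_adjoint_def by metis
  then show ?thesis
    by (simp add: is_adjoint_add[OF assms] is_adjoint_diff[OF assms]
        cinner_add_left cinner_add_right cinner_diff_left cinner_diff_right)
qed

lemma self_adjoint_quadratic_form_le:
  assumes "is_adjoint T T" and "\<And>x. norm x = 1 \<Longrightarrow> \<bar>Re (cinner (T x) x)\<bar> \<le> M"
  shows "\<bar>Re (cinner (T x) x)\<bar> \<le> M * (norm x)\<^sup>2"
proof (cases "x = 0")
  case True
  then show ?thesis
    using is_adjoint_scaleR[OF assms(1), of 0 0] by (simp add: cinner_zero_left)
next
  case False
  define u where "u = (1 / norm x) *\<^sub>R x"
  have x_eq: "x = norm x *\<^sub>R u"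
    using False by (simp add: u_def)
  have "cinner (T x) x = complex_of_real ((norm x)\<^sup>2) * cinner (T u) u"
    by (subst (1 2) x_eq)
      (simp add: is_adjoint_scaleR[OF assms(1)] cinner_scaleR_left cinner_scaleR_right power2_eq_square)
  then have "Re (cinner (T x) x) = (norm x)\<^sup>2 * Re (cinner (T u) u)"
    by simp
  moreover have "\<bar>Re (cinner (T u) u)\<bar> \<le> M"
    using False by (intro assms(2)) (simp add: u_def)
  ultimately show ?thesis
    by (simp add: abs_mult mult_left_mono mult.commute[of M])
qed

lemma self_adjoint_norm_le:
  assumes "is_adjoint T T" and "\<And>x. norm x = 1 \<Longrightarrow> \<bar>Re (cinner (T x) x)\<bar> \<le> M"
  shows "norm (T x) \<le> M * norm x"
proof (cases "T x = 0")
  case True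
  have "0 \<le> M * (norm x)\<^sup>2"
    using self_adjoint_quadratic_form_le[OF assms, of x] by linarith
  then show ?thesis
    using True by (cases "x = 0") (auto simp: zero_le_mult_iff)
next
  case False
  then have "x \<noteq> 0"
    using is_adjoint_scaleR[OF assms(1), of 0 0] by auto
  define y where "y = (norm x / norm (T x)) *\<^sub>R T x"
  have "norm y = norm x"
    using False by (simp add: y_def)
  have "4 * (norm x * norm (T x)) = 4 * Re (cinner (T x) y)"
    using False by (simp add: y_def cinner_scaleR_right norm_sq_eq_Re_cinner[symmetric] power2_eq_square)
  also have "\<dots> \<le> M * (norm (x + y))\<^sup>2 + M * (norm (x - y))\<^sup>2"
    using self_adjoint_polarization[OF assms(1), of x y]
      self_adjoint_quadratic_form_le[OF assms, of "x + y"]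
      self_adjoint_quadratic_form_le[OF assms, of "x - y"] by linarith
  also have "\<dots> = M * ((norm (x + y))\<^sup>2 + (norm (x - y))\<^sup>2)"
    by (simp add: distrib_left)
  also have "\<dots> = 4 * (norm x * (M * norm x))"
    unfolding parallelogram_law \<open>norm y = norm x\<close> by (simp add: power2_eq_square)
  finally show ?thesis
    using \<open>x \<noteq> 0\<close> by simp
qed

lemma ReOp_self_adjoint: "is_adjoint A B \<Longrightarrow> is_adjoint (ReOp A B) (ReOp A B)"
  using is_adjoint_sym[of A B]
  by (simp add: is_adjoint_def ReOp_def cinner_scaleC_left cinner_scaleC_right
      cinner_add_left cinner_add_right add.commute)

lemma ImOp_self_adjoint: "is_adjoint A B \<Longrightarrow> is_adjoint (ImOp A B) (ImOp A B)"
  using is_adjoint_sym[of A B]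
  by (simp add: is_adjoint_def ImOp_def cinner_scaleC_left cinner_scaleC_right
      cinner_diff_left cinner_diff_right algebra_simps)

lemma Re_cinner_ReOp: "is_adjoint A B \<Longrightarrow> Re (cinner (ReOp A B x) x) = Re (cinner (A x) x)"
  by (simp add: ReOp_def cinner_scaleC_left cinner_add_left is_adjoint_cinner_self)

lemma Re_cinner_ImOp: "is_adjoint A B \<Longrightarrow> Re (cinner (ImOp A B x) x) = Im (cinner (A x) x)"
  by (simp add: ImOp_def cinner_scaleC_left cinner_diff_left is_adjoint_cinner_self Re_divide)

lemma ReOp_add_ImOp: "ReOp A B x + scaleC \<i> (ImOp A B x) = A x"
proof -
  have "ReOp A B x + scaleC \<i> (ImOp A B x) = scaleC (1 / 2) (A x) + scaleC (1 / 2) (A x)"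
    by (simp add: ReOp_def ImOp_def scaleC_scaleC scaleC_add_right scaleC_diff_right)
  also have "\<dots> = A x"
    by (simp add: scaleC_add_left[symmetric] scaleC_one)
  finally show ?thesis .
qed

lemma norm_le_norm_ReOp_add_norm_ImOp: "norm (A x) \<le> norm (ReOp A B x) + norm (ImOp A B x)"
  using norm_triangle_ineq[of "ReOp A B x" "scaleC \<i> (ImOp A B x)"]
  by (simp add: ReOp_add_ImOp norm_scaleC)

section \<open>Continuity of omega\<close>

lemma Sup_insert_0_le_add:
  fixes f g :: "'b \<Rightarrow> real"
  assumes "bdd_above (g ` S)" and "\<And>x. x \<in> S \<Longrightarrow> f x \<le> g x + e" and "0 \<le> e"
  shows "Sup (insert 0 (f ` S)) \<le> Sup (insert 0 (g ` S)) + e"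
proof (rule cSup_least)
  have bdd: "bdd_above (insert 0 (g ` S))"
    using assms(1) by simp
  fix y
  assume "y \<in> insert 0 (f ` S)"
  then consider "y = 0" | x where "x \<in> S" "y = f x"
    by blast
  then show "y \<le> Sup (insert 0 (g ` S)) + e"
  proof cases
    case 1
    then show ?thesis
      using cSup_upper[OF insertI1 bdd] assms(3) by simp
  next
    case 2
    then show ?thesis
      using cSup_upper[OF insertI2[OF imageI] bdd] assms(2) by force
  qed
qed simp

lemma lipschitz_on_Sup_insert_0:
  fixes h :: "'a::metric_space \<Rightarrow> 'b \<Rightarrow> real"
  assumes "\<And>t. t \<in> U \<Longrightarrow> bdd_above (h t ` S)"
    and "\<And>x. x \<in> S \<Longrightarrow> L-lipschitz_on U (\<lambda>t. h t x)" and "0 \<le> L"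
  shows "L-lipschitz_on U (\<lambda>t. Sup (insert 0 (h t ` S)))"
proof (rule lipschitz_onI)
  fix t s
  assume "t \<in> U" "s \<in> U"
  have "h t x \<le> h s x + L * dist t s" and "h s x \<le> h t x + L * dist t s" if "x \<in> S" for x
    using lipschitz_onD[OF assms(2)[OF that] \<open>t \<in> U\<close> \<open>s \<in> U\<close>] by (auto simp: dist_real_def dist_commute)
  then have "Sup (insert 0 (h t ` S)) \<le> Sup (insert 0 (h s ` S)) + L * dist t s"
    and "Sup (insert 0 (h s ` S)) \<le> Sup (insert 0 (h t ` S)) + L * dist t s"
    using assms(1) \<open>t \<in> U\<close> \<open>s \<in> U\<close> \<open>0 \<le> L\<close> by (auto intro!: Sup_insert_0_le_add)
  then show "dist (Sup (insert 0 (h t ` S))) (Sup (insert 0 (h s ` S))) \<le> L * dist t s"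
    by (simp add: dist_real_def abs_le_iff)
qed (fact assms(3))

definition combination_radius :: "('a \<Rightarrow> complex) \<Rightarrow> 'a set \<Rightarrow> real \<times> real \<Rightarrow> real" where
  "combination_radius a S pq =
     Sup (insert 0 ((\<lambda>x. cmod (of_real (fst pq) * a x + of_real (snd pq) * cnj (a x))) ` S))"

lemma cmod_real_combination_le:
  "cmod (of_real p * z + of_real q * cnj z) \<le> (\<bar>p\<bar> + \<bar>q\<bar>) * cmod z"
  using norm_triangle_ineq[of "of_real p * z" "of_real q * cnj z"]
  by (simp add: norm_mult distrib_right)

lemma combination_radius_bdd_above:
  assumes "\<And>x. x \<in> S \<Longrightarrow> cmod (a x) \<le> K"
  shows "bdd_above ((\<lambda>x. cmod (of_real p * a x + of_real q * cnj (a x))) ` S)"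
proof (rule bdd_aboveI2)
  fix x
  assume "x \<in> S"
  then show "cmod (of_real p * a x + of_real q * cnj (a x)) \<le> (\<bar>p\<bar> + \<bar>q\<bar>) * K"
    using cmod_real_combination_le[of p "a x" q] assms
    by (meson abs_ge_zero add_nonneg_nonneg mult_left_mono order_trans)
qed

lemma combination_radius_ge:
  assumes "\<And>x. x \<in> S \<Longrightarrow> cmod (a x) \<le> K" and "x \<in> S"
  shows "cmod (of_real p * a x + of_real q * cnj (a x)) \<le> combination_radius a S (p, q)"
  unfolding combination_radius_def
  using combination_radius_bdd_above[OF assms(1)] assms(2) by (auto intro!: cSup_upper)

lemma combination_radius_nonneg:
  assumes "\<And>x. x \<in> S \<Longrightarrow> cmod (a x) \<le> K"
  shows "0 \<le> combination_radius a S pq"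
  unfolding combination_radius_def
  using combination_radius_bdd_above[OF assms] by (auto intro!: cSup_upper)

lemma lipschitz_on_combination_radius:
  assumes "\<And>x. x \<in> S \<Longrightarrow> cmod (a x) \<le> K" and "0 \<le> K"
  shows "(2 * K)-lipschitz_on UNIV (combination_radius a S)"
  unfolding combination_radius_def
proof (rule lipschitz_on_Sup_insert_0)
  fix x
  assume "x \<in> S"
  show "(2 * K)-lipschitz_on UNIV (\<lambda>pq. cmod (of_real (fst pq) * a x + of_real (snd pq) * cnj (a x)))"
  proof (rule lipschitz_onI)
    fix pq pq' :: "real \<times> real"
    obtain p q p' q' where pq: "pq = (p, q)" "pq' = (p', q')"
      by fastforce
    have "of_real p * a x + of_real q * cnj (a x) - (of_real p' * a x + of_real q' * cnj (a x))
        = of_real (p - p') * a x + of_real (q - q') * cnj (a x)"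
      by (simp add: algebra_simps)
    then have "dist (cmod (of_real p * a x + of_real q * cnj (a x)))
                 (cmod (of_real p' * a x + of_real q' * cnj (a x)))
               \<le> cmod (of_real (p - p') * a x + of_real (q - q') * cnj (a x))"
      by (metis dist_real_def norm_triangle_ineq3)
    also have "\<dots> \<le> (\<bar>p - p'\<bar> + \<bar>q - q'\<bar>) * K"
      using cmod_real_combination_le[of "p - p'" "a x" "q - q'"] assms(1)[OF \<open>x \<in> S\<close>]
      by (meson abs_ge_zero add_nonneg_nonneg mult_left_mono order_trans)
    also have "\<dots> \<le> (2 * dist pq pq') * K"
      using dist_fst_le[of pq pq'] dist_snd_le[of pq pq']
      by (intro mult_right_mono assms(2)) (simp add: pq dist_real_def)
    finally show "dist (cmod (of_real (fst pq) * a x + of_real (snd pq) * cnj (a x)))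
        (cmod (of_real (fst pq') * a x + of_real (snd pq') * cnj (a x))) \<le> 2 * K * dist pq pq'"
      by (simp add: pq algebra_simps)
  qed (use assms(2) in simp)
qed (use combination_radius_bdd_above[OF assms(1)] assms(2) in auto)

lemma bounded_linear_quadratic_form_bounded:
  fixes A :: "'a::complex_inner \<Rightarrow> 'a"
  assumes "bounded_linear A"
  obtains K where "0 \<le> K" and "\<And>x. norm x = 1 \<Longrightarrow> cmod (cinner (A x) x) \<le> K"
proof -
  obtain K where K: "\<And>x. norm (A x) \<le> norm x * K"
    using bounded_linear.bounded[OF assms] by blast
  show ?thesis
  proof
    show "0 \<le> (K\<^sup>2 + 1) / 2"
      by simp
    fix x :: 'a
    assume "norm x = 1"
    then have "(norm (A x))\<^sup>2 \<le> K\<^sup>2"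
      using K[of x] by (simp add: abs_le_square_iff power2_eq_square mult_mono')
    then show "cmod (cinner (A x) x) \<le> (K\<^sup>2 + 1) / 2"
      using cmod_cinner_le[of "A x" x] \<open>norm x = 1\<close> by simp
  qed
qed

lemma omega_eq_combination_radius:
  "is_adjoint A B \<Longrightarrow> omega \<phi> \<psi> A B t = combination_radius (\<lambda>x. cinner (A x) x) {x. norm x = 1} (\<phi> t, \<psi> t)"
  by (simp add: omega_def combination_radius_def cinner_add_left cinner_scaleC_left is_adjoint_cinner_self)

lemma cmod_real_combination_le_omega:
  assumes "bounded_linear A" and "is_adjoint A B" and "norm x = 1"
  shows "cmod (of_real (\<phi> t) * cinner (A x) x + of_real (\<psi> t) * cnj (cinner (A x) x)) \<le> omega \<phi> \<psi> A B t"
proof -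
  obtain K where "\<And>x. norm x = 1 \<Longrightarrow> cmod (cinner (A x) x) \<le> K"
    using bounded_linear_quadratic_form_bounded[OF assms(1)] by blast
  then show ?thesis
    unfolding omega_eq_combination_radius[OF assms(2)]
    by (rule combination_radius_ge) (use assms(3) in simp_all)
qed

lemma omega_nonneg:
  assumes "bounded_linear A" and "is_adjoint A B"
  shows "0 \<le> omega \<phi> \<psi> A B t"
proof -
  obtain K where "\<And>x. norm x = 1 \<Longrightarrow> cmod (cinner (A x) x) \<le> K"
    using bounded_linear_quadratic_form_bounded[OF assms(1)] by blast
  then show ?thesis
    unfolding omega_eq_combination_radius[OF assms(2)]
    by (rule combination_radius_nonneg) simp
qed

lemma continuous_on_omega:
  assumes "bounded_linear A" and "is_adjoint A B"
    and "continuous_on T \<phi>" and "continuous_on T \<psi>"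
  shows "continuous_on T (omega \<phi> \<psi> A B)"
proof -
  obtain K where "0 \<le> K" and "\<And>x. norm x = 1 \<Longrightarrow> cmod (cinner (A x) x) \<le> K"
    using bounded_linear_quadratic_form_bounded[OF assms(1)] by blast
  then have "continuous_on UNIV (combination_radius (\<lambda>x. cinner (A x) x) {x. norm x = 1})"
    by (intro lipschitz_on_continuous_on[OF lipschitz_on_combination_radius]) auto
  then show ?thesis
    unfolding omega_eq_combination_radius[OF assms(2), abs_def]
    by (rule continuous_on_compose2) (auto intro: continuous_intros assms(3,4))
qed

section \<open>Integral bounds\<close>

lemma mult_integral_le:
  fixes f g :: "real \<Rightarrow> real"
  assumes "f integrable_on S" and "g integrable_on S" and "\<And>t. t \<in> S \<Longrightarrow> c * f t \<le> g t"
  shows "c * integral S f \<le> integral S g"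
  using integral_le[OF integrable_on_mult_right[OF assms(1)] assms(2)] assms(3)
  by (simp add: integral_mult)

lemma integral_abs_pos:
  fixes g :: "real \<Rightarrow> real"
  assumes "continuous_on {a..b} g" and "a < b" and "t \<in> {a..b}" and "g t \<noteq> 0"
  shows "0 < integral {a..b} (\<lambda>t. \<bar>g t\<bar>)"
proof -
  have "continuous_on {a..b} (\<lambda>t. \<bar>g t\<bar>)"
    using assms(1) by (intro continuous_intros)
  then have "integral {a..b} (\<lambda>t. \<bar>g t\<bar>) \<noteq> 0" and "0 \<le> integral {a..b} (\<lambda>t. \<bar>g t\<bar>)"
    using integral_eq_0_iff[of a b "\<lambda>t. \<bar>g t\<bar>"] assms(2-4)
    by (auto intro: integral_nonneg integrable_continuous_interval)
  then show ?thesis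
    by linarith
qed

lemma Re_real_combination: "Re (of_real p * z + of_real q * cnj z) = (p + q) * Re z"
  by (simp add: algebra_simps)

lemma Im_real_combination: "Im (of_real p * z + of_real q * cnj z) = (p - q) * Im z"
  by (simp add: algebra_simps)

lemma abs_Re_cinner_mult_integral_le:
  assumes "bounded_linear A" and "is_adjoint A B"
    and "continuous_on {a..b} \<phi>" and "continuous_on {a..b} \<psi>" and "norm x = 1"
  shows "\<bar>Re (cinner (A x) x)\<bar> * integral {a..b} (\<lambda>t. \<bar>\<phi> t + \<psi> t\<bar>) \<le> integral {a..b} (omega \<phi> \<psi> A B)"
proof (rule mult_integral_le)
  fix t
  have "\<bar>Re (cinner (A x) x)\<bar> * \<bar>\<phi> t + \<psi> t\<bar>
      = \<bar>Re (of_real (\<phi> t) * cinner (A x) x + of_real (\<psi> t) * cnj (cinner (A x) x))\<bar>"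
    unfolding Re_real_combination by (simp add: abs_mult)
  also have "\<dots> \<le> cmod (of_real (\<phi> t) * cinner (A x) x + of_real (\<psi> t) * cnj (cinner (A x) x))"
    by (rule abs_Re_le_cmod)
  also have "\<dots> \<le> omega \<phi> \<psi> A B t"
    by (rule cmod_real_combination_le_omega[OF assms(1,2,5)])
  finally show "\<bar>Re (cinner (A x) x)\<bar> * \<bar>\<phi> t + \<psi> t\<bar> \<le> omega \<phi> \<psi> A B t" .
qed (use assms in \<open>auto intro!: integrable_continuous_interval continuous_on_omega continuous_intros\<close>)

lemma abs_Im_cinner_mult_integral_le:
  assumes "bounded_linear A" and "is_adjoint A B"
    and "continuous_on {a..b} \<phi>" and "continuous_on {a..b} \<psi>" and "norm x = 1"
  shows "\<bar>Im (cinner (A x) x)\<bar> * integral {a..b} (\<lambda>t. \<bar>\<phi> t - \<psi> t\<bar>) \<le> integral {a..b} (omega \<phi> \<psi> A B)"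
proof (rule mult_integral_le)
  fix t
  have "\<bar>Im (cinner (A x) x)\<bar> * \<bar>\<phi> t - \<psi> t\<bar>
      = \<bar>Im (of_real (\<phi> t) * cinner (A x) x + of_real (\<psi> t) * cnj (cinner (A x) x))\<bar>"
    unfolding Im_real_combination by (simp add: abs_mult)
  also have "\<dots> \<le> cmod (of_real (\<phi> t) * cinner (A x) x + of_real (\<psi> t) * cnj (cinner (A x) x))"
    by (rule abs_Im_le_cmod)
  also have "\<dots> \<le> omega \<phi> \<psi> A B t"
    by (rule cmod_real_combination_le_omega[OF assms(1,2,5)])
  finally show "\<bar>Im (cinner (A x) x)\<bar> * \<bar>\<phi> t - \<psi> t\<bar> \<le> omega \<phi> \<psi> A B t" .
qed (use assms in \<open>auto intro!: integrable_continuous_interval continuous_on_omega continuous_intros\<close>)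

lemma norm_ReOp_le_integral:
  assumes "bounded_linear A" and "is_adjoint A B"
    and "continuous_on {a..b} \<phi>" and "continuous_on {a..b} \<psi>"
    and "0 < integral {a..b} (\<lambda>t. \<bar>\<phi> t + \<psi> t\<bar>)"
  shows "norm (ReOp A B x)
    \<le> 1 / integral {a..b} (\<lambda>t. \<bar>\<phi> t + \<psi> t\<bar>) * integral {a..b} (omega \<phi> \<psi> A B) * norm x"
proof (rule self_adjoint_norm_le[OF ReOp_self_adjoint[OF assms(2)]])
  fix y :: 'a
  assume "norm y = 1"
  then show "\<bar>Re (cinner (ReOp A B y) y)\<bar>
      \<le> 1 / integral {a..b} (\<lambda>t. \<bar>\<phi> t + \<psi> t\<bar>) * integral {a..b} (omega \<phi> \<psi> A B)"
    using abs_Re_cinner_mult_integral_le[OF assms(1-4)] assms(5)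
    by (simp add: Re_cinner_ReOp[OF assms(2)] field_simps)
qed

lemma norm_ImOp_le_integral:
  assumes "bounded_linear A" and "is_adjoint A B"
    and "continuous_on {a..b} \<phi>" and "continuous_on {a..b} \<psi>"
    and "0 < integral {a..b} (\<lambda>t. \<bar>\<phi> t - \<psi> t\<bar>)"
  shows "norm (ImOp A B x)
    \<le> 1 / integral {a..b} (\<lambda>t. \<bar>\<phi> t - \<psi> t\<bar>) * integral {a..b} (omega \<phi> \<psi> A B) * norm x"
proof (rule self_adjoint_norm_le[OF ImOp_self_adjoint[OF assms(2)]])
  fix y :: 'a
  assume "norm y = 1"
  then show "\<bar>Re (cinner (ImOp A B y) y)\<bar>
      \<le> 1 / integral {a..b} (\<lambda>t. \<bar>\<phi> t - \<psi> t\<bar>) * integral {a..b} (omega \<phi> \<psi> A B)"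
    using abs_Im_cinner_mult_integral_le[OF assms(1-4)] assms(5)
    by (simp add: Re_cinner_ImOp[OF assms(2)] field_simps)
qed

lemma integral_omega_nonneg:
  assumes "bounded_linear A" and "is_adjoint A B"
    and "continuous_on {a..b} \<phi>" and "continuous_on {a..b} \<psi>"
  shows "0 \<le> integral {a..b} (omega \<phi> \<psi> A B)"
  using assms
  by (auto intro!: integral_nonneg omega_nonneg integrable_continuous_interval continuous_on_omega)

lemma onorm_ReOp_le_integral:
  assumes "bounded_linear A" and "is_adjoint A B"
    and "continuous_on {a..b} \<phi>" and "continuous_on {a..b} \<psi>"
    and "a < b" and "\<exists>t\<in>{a..b}. \<phi> t + \<psi> t \<noteq> 0"
  shows "onorm (ReOp A B)
    \<le> 1 / integral {a..b} (\<lambda>t. \<bar>\<phi> t + \<psi> t\<bar>) * integral {a..b} (omega \<phi> \<psi> A B)"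
proof -
  have "0 < integral {a..b} (\<lambda>t. \<bar>\<phi> t + \<psi> t\<bar>)"
    using assms(3-6) by (auto intro!: integral_abs_pos continuous_intros)
  then show ?thesis
    using integral_omega_nonneg[OF assms(1-4)]
    by (intro onorm_bound[OF _ norm_ReOp_le_integral[OF assms(1-4)]]) simp_all
qed

lemma onorm_ImOp_le_integral:
  assumes "bounded_linear A" and "is_adjoint A B"
    and "continuous_on {a..b} \<phi>" and "continuous_on {a..b} \<psi>"
    and "a < b" and "\<exists>t\<in>{a..b}. \<phi> t \<noteq> \<psi> t"
  shows "onorm (ImOp A B)
    \<le> 1 / integral {a..b} (\<lambda>t. \<bar>\<phi> t - \<psi> t\<bar>) * integral {a..b} (omega \<phi> \<psi> A B)"
proof -
  have "0 < integral {a..b} (\<lambda>t. \<bar>\<phi> t - \<psi> t\<bar>)"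
    using assms(3-6) by (auto intro!: integral_abs_pos continuous_intros)
  then show ?thesis
    using integral_omega_nonneg[OF assms(1-4)]
    by (intro onorm_bound[OF _ norm_ImOp_le_integral[OF assms(1-4)]]) simp_all
qed

lemma onorm_le_integral:
  assumes "bounded_linear A" and "is_adjoint A B"
    and "continuous_on {a..b} \<phi>" and "continuous_on {a..b} \<psi>"
    and "a < b" and "\<exists>t\<in>{a..b}. \<bar>\<phi> t\<bar> \<noteq> \<bar>\<psi> t\<bar>"
  shows "onorm A \<le> (1 / integral {a..b} (\<lambda>t. \<bar>\<phi> t + \<psi> t\<bar>) + 1 / integral {a..b} (\<lambda>t. \<bar>\<phi> t - \<psi> t\<bar>))
    * integral {a..b} (omega \<phi> \<psi> A B)"
    (is "_ \<le> (1 / ?I\<^sub>1 + 1 / ?I\<^sub>2) * ?J")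
proof (rule onorm_bound)
  obtain t where "t \<in> {a..b}" and "\<phi> t + \<psi> t \<noteq> 0" and "\<phi> t - \<psi> t \<noteq> 0"
    using assms(6) by force
  then have I\<^sub>1: "0 < ?I\<^sub>1" and I\<^sub>2: "0 < ?I\<^sub>2"
    using assms(3-5) by (auto intro!: integral_abs_pos continuous_intros)
  then show "0 \<le> (1 / ?I\<^sub>1 + 1 / ?I\<^sub>2) * ?J"
    using integral_omega_nonneg[OF assms(1-4)] by simp
  fix x
  show "norm (A x) \<le> (1 / ?I\<^sub>1 + 1 / ?I\<^sub>2) * ?J * norm x"
    using norm_le_norm_ReOp_add_norm_ImOp[of A x B]
      norm_ReOp_le_integral[OF assms(1-4) I\<^sub>1, of x] norm_ImOp_le_integral[OF assms(1-4) I\<^sub>2, of x]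
    by (simp add: algebra_simps)
qed

theorem proposition2p9:
  fixes A Astar :: "'a::complex_hilbert \<Rightarrow> 'a"
    and \<phi> \<psi> :: "real \<Rightarrow> real"
  assumes "continuous_on {0..1} \<phi>" and "continuous_on {0..1} \<psi>"
    and "bounded_op A" and "is_adjoint A Astar"
  shows "((\<exists>t\<in>{0..1}. \<phi> t + \<psi> t \<noteq> 0) \<longrightarrow>
            onorm (ReOp A Astar) \<le>
              (1 / integral {0..1} (\<lambda>t. \<bar>\<phi> t + \<psi> t\<bar>)) * integral {0..1} (omega \<phi> \<psi> A Astar))
       \<and> ((\<exists>t\<in>{0..1}. \<phi> t \<noteq> \<psi> t) \<longrightarrow>
            onorm (ImOp A Astar) \<le>
              (1 / integral {0..1} (\<lambda>t. \<bar>\<phi> t - \<psi> t\<bar>)) * integral {0..1} (omega \<phi> \<psi> A Astar))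
       \<and> ((\<exists>t\<in>{0..1}. \<bar>\<phi> t\<bar> \<noteq> \<bar>\<psi> t\<bar>) \<longrightarrow>
            onorm A \<le>
              (1 / integral {0..1} (\<lambda>t. \<bar>\<phi> t + \<psi> t\<bar>) + 1 / integral {0..1} (\<lambda>t. \<bar>\<phi> t - \<psi> t\<bar>))
              * integral {0..1} (omega \<phi> \<psi> A Astar))"
proof -
  have A: "bounded_linear A"
    using assms(3) by (simp add: bounded_op_def)
  show ?thesis
    using onorm_ReOp_le_integral[OF A assms(4,1,2) zero_less_one]
      onorm_ImOp_le_integral[OF A assms(4,1,2) zero_less_one]
      onorm_le_integral[OF A assms(4,1,2) zero_less_one]
    by blast
qed

end
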